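(* Let $n\ge3$ and let $A(z_1,\dots,z_n)=\sum_{i=1}^n[z_i,z_{i+1}]$ on the space of plane $n$-gons. Every level hypersurface $\{A=a\}$ with $a\neq0$ is smooth, and the dual Birkhoff distribution $\mathcal F$ is tangent to these hypersurfaces.
   Context: $[\cdot,\cdot]$ is the determinant of two plane vectors; indices are cyclic. The function $A$ is twice the (signed) area of the polygon. $G_n$ is the set of $n$-gons $(z_1,\dots,z_n)\in(\mathbb R^2)^n$ with $z_i\ne z_{i+1}$ for all $i$. The dual Birkhoff distribution $\mathcal F$ on $G_n$: a tangent vector $W=(w_1,\dots,w_n)$ (velocities of the vertices) lies in $\mathcal F$ iff for each $i$ the induced motion of the line $z_iz_{i+1}$ is an infinitesimal rotation about the midpoint of $z_iz_{i+1}$; equivalently $[w_i+w_{i+1},z_{i+1}-z_i]=0$ for all $i$. *)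

theory Defs
  imports "HOL-Analysis.Analysis"
begin

text \<open>Plane vectors are pairs of reals. A plane n-gon is a function
  z :: nat \<Rightarrow> real \<times> real, of which only the values z 0, ..., z (n-1) matter;
  indices are taken cyclically (mod n).\<close>

definition det2 :: "real \<times> real \<Rightarrow> real \<times> real \<Rightarrow> real" where
  "det2 u v = fst u * snd v - snd u * fst v"

definition polyA :: "nat \<Rightarrow> (nat \<Rightarrow> real \<times> real) \<Rightarrow> real" where
  "polyA n z = (\<Sum>i<n. det2 (z i) (z ((i + 1) mod n)))"

definition in_G :: "nat \<Rightarrow> (nat \<Rightarrow> real \<times> real) \<Rightarrow> bool" where
  "in_G n z \<longleftrightarrow> (\<forall>i<n. z i \<noteq> z ((i + 1) mod n))"

definition dual_birkhoff :: "nat \<Rightarrow> (nat \<Rightarrow> real \<times> real) \<Rightarrow> (nat \<Rightarrow> real \<times> real) \<Rightarrow> bool" where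
  "dual_birkhoff n z w \<longleftrightarrow>
     (\<forall>i<n. det2 (w i + w ((i + 1) mod n)) (z ((i + 1) mod n) - z i) = 0)"

end

theory Submission
  imports Defs
begin

text \<open>A is a quadratic form, so its derivative in the radial direction z is 2 A(z) (Euler's
  identity), which is nonzero on a level set with a \<noteq> 0; hence that level set is regular.
  For W in the dual Birkhoff distribution, the defining condition turns the i-th term of the
  derivative dA_z(W) into the difference [w_i, z_i] - [w_(i+1), z_(i+1)], so the cyclic sum
  telescopes to 0.\<close>

lemma sum_lessThan_mod_shift:
  fixes f :: "nat \<Rightarrow> 'a::comm_monoid_add"
  shows "(\<Sum>i<n. f ((i + 1) mod n)) = (\<Sum>i<n. f i)"
proof (cases n)
  case 0
  then show ?thesis by simp
next
  case (Suc m)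
  have "(\<Sum>i<Suc m. f ((i + 1) mod Suc m)) = (\<Sum>i<m. f ((i + 1) mod Suc m)) + f 0"
    by (simp add: sum.lessThan_Suc)
  also have "(\<Sum>i<m. f ((i + 1) mod Suc m)) = (\<Sum>i<m. f (Suc i))"
    by (rule sum.cong) auto
  also have "\<dots> + f 0 = (\<Sum>i<Suc m. f i)"
    by (subst sum.lessThan_Suc_shift) (simp add: add.commute)
  finally show ?thesis
    using Suc by simp
qed

lemma sum_lessThan_mod_telescope:
  fixes g :: "nat \<Rightarrow> 'a::ab_group_add"
  shows "(\<Sum>i<n. g i - g ((i + 1) mod n)) = 0"
  unfolding sum_subtractf sum_lessThan_mod_shift by simp

definition polyA_deriv :: "nat \<Rightarrow> (nat \<Rightarrow> real \<times> real) \<Rightarrow> (nat \<Rightarrow> real \<times> real) \<Rightarrow> real" where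
  "polyA_deriv n z w = (\<Sum>i<n. det2 (w i) (z ((i + 1) mod n)) + det2 (z i) (w ((i + 1) mod n)))"

lemma has_real_derivative_polyA_line:
  "((\<lambda>t. polyA n (\<lambda>i. z i + t *\<^sub>R w i)) has_real_derivative polyA_deriv n z w) (at 0)"
  unfolding polyA_def polyA_deriv_def
proof (rule DERIV_sum)
  fix i
  show "((\<lambda>t. det2 (z i + t *\<^sub>R w i) (z ((i + 1) mod n) + t *\<^sub>R w ((i + 1) mod n)))
      has_real_derivative det2 (w i) (z ((i + 1) mod n)) + det2 (z i) (w ((i + 1) mod n))) (at 0)"
    unfolding det2_def by (auto intro!: derivative_eq_intros)
qed

lemma polyA_deriv_radial: "polyA_deriv n z z = 2 * polyA n z"
  by (simp add: polyA_deriv_def polyA_def sum_distrib_left)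

lemma det2_polarization_dual_birkhoff:
  assumes "det2 (w + w') (z' - z) = 0"
  shows "det2 w z' + det2 z w' = det2 w z - det2 w' z'"
  using assms by (simp add: det2_def algebra_simps)

lemma polyA_deriv_dual_birkhoff:
  assumes "dual_birkhoff n z w"
  shows "polyA_deriv n z w = 0"
proof -
  have "polyA_deriv n z w = (\<Sum>i<n. det2 (w i) (z i) - det2 (w ((i + 1) mod n)) (z ((i + 1) mod n)))"
    unfolding polyA_deriv_def
    using assms by (intro sum.cong refl det2_polarization_dual_birkhoff) (auto simp: dual_birkhoff_def)
  then show ?thesis
    using sum_lessThan_mod_telescope[of "\<lambda>i. det2 (w i) (z i)" n] by simp
qed

theorem lemma2p3:
  fixes n :: nat and a :: real
  assumes "n \<ge> 3" and "a \<noteq> 0"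
  shows "(\<forall>z. in_G n z \<and> polyA n z = a \<longrightarrow>
            (\<exists>w D. ((\<lambda>t. polyA n (\<lambda>i. z i + t *\<^sub>R w i)) has_real_derivative D) (at 0) \<and> D \<noteq> 0))
       \<and> (\<forall>z w. in_G n z \<and> polyA n z = a \<and> dual_birkhoff n z w \<longrightarrow>
            ((\<lambda>t. polyA n (\<lambda>i. z i + t *\<^sub>R w i)) has_real_derivative 0) (at 0))"
proof (intro conjI allI impI)
  fix z
  assume "in_G n z \<and> polyA n z = a"
  then have "polyA_deriv n z z \<noteq> 0"
    using \<open>a \<noteq> 0\<close> by (simp add: polyA_deriv_radial)
  then show "\<exists>w D. ((\<lambda>t. polyA n (\<lambda>i. z i + t *\<^sub>R w i)) has_real_derivative D) (at 0) \<and> D \<noteq> 0"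
    using has_real_derivative_polyA_line by blast
next
  fix z w
  assume "in_G n z \<and> polyA n z = a \<and> dual_birkhoff n z w"
  then show "((\<lambda>t. polyA n (\<lambda>i. z i + t *\<^sub>R w i)) has_real_derivative 0) (at 0)"
    using has_real_derivative_polyA_line[of n z w] polyA_deriv_dual_birkhoff by simp
qed

end
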